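(* If $\Gamma$ is a Deza graph with parameters $(n,k,k-1,a)$, $k > 1$, and $\beta = 1$, then $\Gamma$ can be obtained either from Construction 1 or from Construction 2 (both described in the context below).
   Context: A Deza graph with parameters $(n,k,b,a)$ is a $k$-regular graph on $n$ vertices in which any two distinct vertices have either $a$ or $b$ ($a\le b$) common neighbours. For a vertex $v$, $\beta$ denotes the number of vertices $u$ with $|N(v)\cap N(u)|=b$; this number does not depend on $v$. Both constructions start from a strongly regular graph $\Delta$ with parameters $(m,\ell,\lambda,\mu)$ where $\lambda=\mu-1$, with adjacency matrix $B$. Construction 1: $\Gamma_1$ is the strong product of $K_2$ and $\Delta$, i.e. its adjacency matrix is $A_1 = B\otimes J_2 - I_{2m}$ ($J_2$ the $2\times 2$ all-ones matrix, $I_{2m}$ the identity matrix). It is a strictly Deza graph with parameters $(n,k,k-1,a)$ and $\beta=1$, where $n=2m$, $k=2\ell+1$, $a=2\mu$. Construction 2: assume $\Delta$ has an involutive automorphism that interchanges only non-adjacent vertices, with permutation matrix $P$. Let $P_1=P\otimes I_2$ and $A_2=P_1A_1$. Equivalently: take the strong product of $K_2$ with the graph of adjacency matrix $PB$ (dual Seidel switching of $\Delta$), and for every transposition $(x~y)$ of the involution, with corresponding vertex pairs $x',x''$ and $y',y''$, delete the edges $\{x',x''\}$, $\{y',y''\}$ and insert the edges $\{x',y''\}$, $\{x'',y'\}$. The resulting graph $\Gamma_2$ (adjacency matrix $A_2$, with $A_2^2=A_1^2$) is a strictly Deza graph with parameters $(n,k,k-1,a)$ and $\beta=1$, where $n=2m$,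 $k=2\ell+1$, $a=2\mu$. *)

theory Defs
  imports Main
begin

text \<open>Finite simple graphs: a finite vertex set V with a symmetric irreflexive
  adjacency relation E (only its restriction to V matters).\<close>

definition sgraph :: "'a set \<Rightarrow> ('a \<Rightarrow> 'a \<Rightarrow> bool) \<Rightarrow> bool" where
  "sgraph V E \<longleftrightarrow> finite V \<and> (\<forall>x\<in>V. \<not> E x x) \<and> (\<forall>x\<in>V. \<forall>y\<in>V. E x y \<longleftrightarrow> E y x)"

definition nbhd :: "'a set \<Rightarrow> ('a \<Rightarrow> 'a \<Rightarrow> bool) \<Rightarrow> 'a \<Rightarrow> 'a set" where
  "nbhd V E v = {u\<in>V. E v u}"

definition regular :: "'a set \<Rightarrow> ('a \<Rightarrow> 'a \<Rightarrow> bool) \<Rightarrow> nat \<Rightarrow> bool" where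
  "regular V E k \<longleftrightarrow> (\<forall>v\<in>V. card (nbhd V E v) = k)"

definition deza_graph :: "'a set \<Rightarrow> ('a \<Rightarrow> 'a \<Rightarrow> bool) \<Rightarrow> nat \<Rightarrow> nat \<Rightarrow> nat \<Rightarrow> nat \<Rightarrow> bool" where
  "deza_graph V E n k b a \<longleftrightarrow> sgraph V E \<and> card V = n \<and> regular V E k \<and> a \<le> b \<and>
     (\<forall>u\<in>V. \<forall>v\<in>V. u \<noteq> v \<longrightarrow>
        card (nbhd V E u \<inter> nbhd V E v) = a \<or> card (nbhd V E u \<inter> nbhd V E v) = b)"

definition beta_at :: "'a set \<Rightarrow> ('a \<Rightarrow> 'a \<Rightarrow> bool) \<Rightarrow> nat \<Rightarrow> 'a \<Rightarrow> nat" where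
  "beta_at V E b v = card {u\<in>V. u \<noteq> v \<and> card (nbhd V E v \<inter> nbhd V E u) = b}"

definition srg :: "'a set \<Rightarrow> ('a \<Rightarrow> 'a \<Rightarrow> bool) \<Rightarrow> nat \<Rightarrow> nat \<Rightarrow> nat \<Rightarrow> nat \<Rightarrow> bool" where
  "srg V E m l lam mu \<longleftrightarrow> sgraph V E \<and> card V = m \<and> regular V E l \<and>
     (\<forall>u\<in>V. \<forall>v\<in>V. u \<noteq> v \<longrightarrow> E u v \<longrightarrow> card (nbhd V E u \<inter> nbhd V E v) = lam) \<and>
     (\<forall>u\<in>V. \<forall>v\<in>V. u \<noteq> v \<longrightarrow> \<not> E u v \<longrightarrow> card (nbhd V E u \<inter> nbhd V E v) = mu)"

definition graph_iso :: "'a set \<Rightarrow> ('a \<Rightarrow> 'a \<Rightarrow> bool) \<Rightarrow> 'b set \<Rightarrow> ('b \<Rightarrow> 'b \<Rightarrow> bool) \<Rightarrow> bool" where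
  "graph_iso V E W F \<longleftrightarrow> (\<exists>f. bij_betw f V W \<and> (\<forall>u\<in>V. \<forall>v\<in>V. E u v \<longleftrightarrow> F (f u) (f v)))"

text \<open>Construction 1: strong product of K_2 and Delta, vertex set D \<times> UNIV (bool indexes K_2);
  adjacency matrix B \<otimes> J_2 - I.\<close>
definition constr1 :: "('a \<Rightarrow> 'a \<Rightarrow> bool) \<Rightarrow> ('a \<times> bool) \<Rightarrow> ('a \<times> bool) \<Rightarrow> bool" where
  "constr1 B p q \<longleftrightarrow> p \<noteq> q \<and> (fst p = fst q \<or> B (fst p) (fst q))"

definition nonadj_invol_aut :: "'a set \<Rightarrow> ('a \<Rightarrow> 'a \<Rightarrow> bool) \<Rightarrow> ('a \<Rightarrow> 'a) \<Rightarrow> bool" where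
  "nonadj_invol_aut V E s \<longleftrightarrow> s ` V \<subseteq> V \<and> (\<forall>x\<in>V. s (s x) = x) \<and>
     (\<forall>x\<in>V. \<forall>y\<in>V. E (s x) (s y) \<longleftrightarrow> E x y) \<and>
     (\<forall>x\<in>V. s x \<noteq> x \<longrightarrow> \<not> E x (s x))"

text \<open>Construction 2: adjacency matrix A_2 = P_1 A_1 with P_1 = P \<otimes> I_2, i.e.
  A_2((x,i),(y,j)) = A_1((s x,i),(y,j)).\<close>
definition constr2 :: "('a \<Rightarrow> 'a \<Rightarrow> bool) \<Rightarrow> ('a \<Rightarrow> 'a) \<Rightarrow> ('a \<times> bool) \<Rightarrow> ('a \<times> bool) \<Rightarrow> bool" where
  "constr2 B s p q \<longleftrightarrow> constr1 B (s (fst p), snd p) q"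

end

theory Submission
  imports Defs
begin

text \<open>Every vertex v has a unique partner p(v) with k - 1 common neighbours, so
  A^2 = aJ + (k - a)I + (k - 1 - a)P for the adjacency matrix A and the permutation
  matrix P of p; comparing the entries of A A^2 = A^2 A shows that p is an automorphism.
  Hence N(v) is the p-invariant set C(v) = N(v) \<inter> N(p(v)) plus one exclusive neighbour
  e(v), and e is an involution commuting with p. Fix representatives R of the pairs
  {v, p(v)} closed under s = p \<circ> e; p-invariant sets meet R in exactly half of their points.
  For w \<notin> {v, p(v)} we have a = |C(v) \<inter> C(w)| + [e(v) \<in> C(w)] + [e(w) \<in> C(v)] with an even
  first term, which forces a to be even and the two brackets to agree. Consequently the
  graph on R with x ~ y iff y \<in> C(e(x)) is strongly regular with parameters
  (|R|, (k - 1)/2, a/2 - 1, a/2), s is an involutive automorphism of it exchanging only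
  non-adjacent vertices, and sending v to its representative together with the bit
  "v \<notin> R" is an isomorphism onto Construction 2 (which is Construction 1 when s = id).\<close>

lemma nbhd_subset: "nbhd V E v \<subseteq> V"
  by (auto simp: nbhd_def)

lemma mem_nbhd_iff: "u \<in> nbhd V E v \<longleftrightarrow> u \<in> V \<and> E v u"
  by (simp add: nbhd_def)

lemma finite_nbhd: "finite V \<Longrightarrow> finite (nbhd V E v)"
  using nbhd_subset finite_subset by metis

lemma card_insert_Int_insert:
  assumes "finite A" "finite B" "x \<noteq> y" "x \<notin> A" "y \<notin> B"
  shows "card (insert x A \<inter> insert y B) =
    card (A \<inter> B) + (if x \<in> B then 1 else 0) + (if y \<in> A then 1 else 0)"
  using assms by (cases "x \<in> B"; cases "y \<in> A") (simp_all add: Int_insert_left Int_insert_right)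

text \<open>Both sides count the walks of length three from u to w; in matrix terms, A A^2 = A^2 A.\<close>
lemma sum_card_common_nbhd_swap:
  assumes "finite V" and sym: "\<forall>x\<in>V. \<forall>y\<in>V. E x y \<longleftrightarrow> E y x"
  shows "(\<Sum>v\<in>nbhd V E u. card (nbhd V E v \<inter> nbhd V E w)) =
         (\<Sum>x\<in>nbhd V E w. card (nbhd V E u \<inter> nbhd V E x))"
proof -
  let ?N = "nbhd V E"
  have fin: "finite (?N x)" for x using assms(1) by (rule finite_nbhd)
  have "(\<Sum>v\<in>?N u. card (?N v \<inter> ?N w)) = (\<Sum>v\<in>?N u. \<Sum>x\<in>?N w. if E v x then 1 else 0)"
  proof (intro sum.cong refl)
    fix v
    have "?N v \<inter> ?N w = {x \<in> ?N w. E v x}" by (auto simp: nbhd_def)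
    then show "card (?N v \<inter> ?N w) = (\<Sum>x\<in>?N w. if E v x then 1 else 0)"
      using sum.inter_filter[OF fin, of "\<lambda>_. 1::nat" w] by simp
  qed
  also have "\<dots> = (\<Sum>x\<in>?N w. \<Sum>v\<in>?N u. if E v x then 1 else 0)"
    by (rule sum.swap)
  also have "\<dots> = (\<Sum>x\<in>?N w. card (?N u \<inter> ?N x))"
  proof (intro sum.cong refl)
    fix x assume "x \<in> ?N w"
    then have "?N u \<inter> ?N x = {v \<in> ?N u. E v x}"
      using sym by (auto simp: nbhd_def)
    then show "(\<Sum>v\<in>?N u. if E v x then 1 else 0) = card (?N u \<inter> ?N x)"
      using sum.inter_filter[OF fin, of "\<lambda>_. 1::nat" u] by simp
  qed
  finally show ?thesis .
qed

lemma card_eq_twice_card_transversal: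
  assumes "finite S" and p: "\<forall>v\<in>S. p v \<in> S \<and> p (p v) = v"
    and R: "\<forall>v\<in>S. v \<in> R \<longleftrightarrow> p v \<notin> R"
  shows "card S = 2 * card (R \<inter> S)"
proof -
  have "v \<in> p ` (R \<inter> S)" if "v \<in> S" "v \<notin> R" for v
    using that p R by (metis IntI image_eqI)
  then have S_eq: "S = (R \<inter> S) \<union> p ` (R \<inter> S)"
    using p by auto
  have disj: "(R \<inter> S) \<inter> p ` (R \<inter> S) = {}"
    using p R by auto
  have inj: "inj_on p (R \<inter> S)"
    using p by (intro inj_onI) (metis IntD2)
  have "card S = card (R \<inter> S) + card (p ` (R \<inter> S))"
    using card_Un_disjoint[OF _ _ disj] S_eq assms(1) by (metis finite_Int finite_imageI)
  with card_image[OF inj] show ?thesis by simp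
qed

text \<open>Order the \<open>s\<close>-orbits by their least label; \<open>R\<close> takes, from each pair \<open>{v, p v}\<close>,
  the element whose \<open>s\<close>-orbit comes first.\<close>
lemma exists_invariant_transversal:
  assumes "finite V"
    and p: "\<And>v. v \<in> V \<Longrightarrow> p v \<in> V \<and> p (p v) = v \<and> p v \<noteq> v"
    and s: "\<And>v. v \<in> V \<Longrightarrow> s v \<in> V \<and> s (s v) = v \<and> s (p v) = p (s v) \<and> s v \<noteq> p v"
  shows "\<exists>R\<subseteq>V. (\<forall>v\<in>V. v \<in> R \<longleftrightarrow> p v \<notin> R) \<and> (\<forall>v\<in>R. s v \<in> R)"
proof -
  obtain h :: "'a \<Rightarrow> nat" where h: "inj_on h V"
    using finite_imp_inj_to_nat_seg[OF assms(1)] by blast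
  define m where "m v = min (h v) (h (s v))" for v
  have m_s: "m (s v) = m v" if "v \<in> V" for v
    using s[OF that] by (simp add: m_def min.commute)
  have m_p: "m (p v) \<noteq> m v" if v: "v \<in> V" for v
  proof -
    have pv: "p v \<in> V" "p v \<noteq> v" and sv: "s v \<in> V" "s (s v) = v" "s v \<noteq> p v"
      using p[OF v] s[OF v] by blast+
    have spv: "s (p v) \<in> V" "s (s (p v)) = p v"
      using s[OF pv(1)] by blast+
    have "v \<noteq> s (p v)" and "s v \<noteq> s (p v)"
      using sv(2,3) spv(2) pv(2) by metis+
    then have "h v \<noteq> h (p v)" "h v \<noteq> h (s (p v))" "h (s v) \<noteq> h (p v)" "h (s v) \<noteq> h (s (p v))"
      using inj_on_contraD[OF h] v pv sv(1,3) spv(1) by metis+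
    then show ?thesis by (simp add: m_def min_def)
  qed
  define R where "R = {v \<in> V. m v < m (p v)}"
  have "v \<in> R \<longleftrightarrow> p v \<notin> R" if "v \<in> V" for v
    using that m_p[OF that] p[OF that] by (auto simp: R_def)
  moreover have "s v \<in> R" if "v \<in> R" for v
  proof -
    have v: "v \<in> V" using that by (simp add: R_def)
    then have "m (s v) = m v" and "m (p (s v)) = m (p v)"
      using m_s[of v] m_s[of "p v"] p[OF v] s[OF v] by metis+
    then show ?thesis using that s[OF v] by (simp add: R_def)
  qed
  moreover have "R \<subseteq> V" by (simp add: R_def)
  ultimately show ?thesis by blast
qed

lemma bij_betw_transversal_times_UNIV:
  assumes "R \<subseteq> V" and p: "\<forall>v\<in>V. p v \<in> V \<and> p (p v) = v"
    and R: "\<forall>v\<in>V. v \<in> R \<longleftrightarrow> p v \<notin> R"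
  shows "bij_betw (\<lambda>v. (if v \<in> R then v else p v, v \<notin> R)) V (R \<times> UNIV)"
proof -
  let ?f = "\<lambda>v. (if v \<in> R then v else p v, v \<notin> R)"
  let ?g = "\<lambda>(x, i). if i then p x else x"
  have in_R: "v \<in> V \<Longrightarrow> v \<notin> R \<Longrightarrow> p v \<in> R" and notin_R: "x \<in> R \<Longrightarrow> p x \<notin> R" for v x
    using assms by blast+
  show ?thesis
  proof (rule bij_betw_byWitness[where f' = ?g])
    show "\<forall>v\<in>V. ?g (?f v) = v"
      using p by simp
    show "\<forall>q\<in>R \<times> UNIV. ?f (?g q) = q"
    proof
      fix q assume "q \<in> R \<times> (UNIV :: bool set)"
      then obtain x i where q: "q = (x, i)" and x: "x \<in> R" by blast
      then have "p (p x) = x" using p assms(1) by blast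
      then show "?f (?g q) = q"
        using q x notin_R[OF x] by (cases i) simp_all
    qed
    show "?f ` V \<subseteq> R \<times> UNIV"
      using in_R by auto
    show "?g ` (R \<times> UNIV) \<subseteq> V"
      using assms(1) p by auto
  qed
qed

lemma graph_iso_trans:
  assumes "graph_iso U E V F" and "graph_iso V F W G"
  shows "graph_iso U E W G"
proof -
  obtain f where f: "bij_betw f U V" "\<forall>x\<in>U. \<forall>y\<in>U. E x y \<longleftrightarrow> F (f x) (f y)"
    using assms(1) by (auto simp: graph_iso_def)
  obtain g where g: "bij_betw g V W" "\<forall>x\<in>V. \<forall>y\<in>V. F x y \<longleftrightarrow> G (g x) (g y)"
    using assms(2) by (auto simp: graph_iso_def)
  have "bij_betw (g \<circ> f) U W" using f(1) g(1) by (rule bij_betw_trans)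
  moreover have "\<forall>x\<in>U. \<forall>y\<in>U. E x y \<longleftrightarrow> G ((g \<circ> f) x) ((g \<circ> f) y)"
    using f g by (simp add: bij_betw_apply)
  ultimately show ?thesis unfolding graph_iso_def by blast
qed

locale graph_relabelling =
  fixes g :: "'a \<Rightarrow> 'b" and D :: "'a set" and B :: "'a \<Rightarrow> 'a \<Rightarrow> bool"
    and D' :: "'b set" and B' :: "'b \<Rightarrow> 'b \<Rightarrow> bool"
  assumes bij: "bij_betw g D D'"
    and adj: "\<And>x y. x \<in> D \<Longrightarrow> y \<in> D \<Longrightarrow> B' (g x) (g y) \<longleftrightarrow> B x y"
begin

lemma image_eq: "D' = g ` D"
  using bij by (simp add: bij_betw_def)

lemma inj: "x \<in> D \<Longrightarrow> y \<in> D \<Longrightarrow> g x = g y \<longleftrightarrow> x = y"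
  using bij by (auto simp: bij_betw_def inj_on_def)

lemma nbhd_image: "x \<in> D \<Longrightarrow> nbhd D' B' (g x) = g ` nbhd D B x"
  using adj by (auto simp: nbhd_def image_eq)

lemma card_image_subset: "A \<subseteq> D \<Longrightarrow> card (g ` A) = card A"
  using bij by (meson bij_betw_def card_image inj_on_subset)

lemma card_common_nbhd_image:
  assumes "x \<in> D" "y \<in> D"
  shows "card (nbhd D' B' (g x) \<inter> nbhd D' B' (g y)) = card (nbhd D B x \<inter> nbhd D B y)"
proof -
  have "nbhd D' B' (g x) \<inter> nbhd D' B' (g y) = g ` (nbhd D B x \<inter> nbhd D B y)"
    using assms bij nbhd_image nbhd_subset
    by (metis bij_betw_def inj_on_image_Int)
  then show ?thesis
    by (simp add: card_image_subset le_infI1 nbhd_subset)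
qed

lemma srg_image:
  assumes "srg D B m l lam mu"
  shows "srg D' B' m l lam mu"
proof -
  have "card (nbhd D' B' (g x)) = card (nbhd D B x)" if "x \<in> D" for x
    using that by (simp add: nbhd_image card_image_subset nbhd_subset)
  with assms show ?thesis
    using adj inj card_image_subset card_common_nbhd_image
    unfolding srg_def sgraph_def regular_def image_eq by auto
qed

lemma nonadj_invol_aut_image:
  assumes "nonadj_invol_aut D B s" and s': "\<And>x. x \<in> D \<Longrightarrow> s' (g x) = g (s x)"
  shows "nonadj_invol_aut D' B' s'"
  using assms adj inj unfolding nonadj_invol_aut_def image_eq
  by (auto simp: image_subset_iff)

lemma graph_iso_constr2_image:
  assumes "s ` D \<subseteq> D" and s': "\<And>x. x \<in> D \<Longrightarrow> s' (g x) = g (s x)"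
  shows "graph_iso (D \<times> UNIV) (constr2 B s) (D' \<times> UNIV) (constr2 B' s')"
  unfolding graph_iso_def
proof (intro exI conjI ballI)
  show "bij_betw (map_prod g id) (D \<times> UNIV) (D' \<times> UNIV)"
    using bij by (rule bij_betw_map_prod) (rule bij_betw_id)
  fix p q assume p: "p \<in> D \<times> (UNIV :: bool set)" and q: "q \<in> D \<times> (UNIV :: bool set)"
  obtain x i y j where pq: "p = (x, i)" "q = (y, j)" and xy: "x \<in> D" "y \<in> D"
    using p q by auto
  have "s x \<in> D" using assms(1) xy(1) by blast
  then have "g (s x) = g y \<longleftrightarrow> s x = y" and "B' (g (s x)) (g y) \<longleftrightarrow> B (s x) y"
    using inj adj xy(2) by simp_all
  then show "constr2 B s p q \<longleftrightarrow> constr2 B' s' (map_prod g id p) (map_prod g id q)"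
    using pq s'[OF xy(1)] by (simp add: constr2_def constr1_def)
qed

end

lemma constr2_relabel_nat:
  fixes D :: "'b set"
  assumes "srg D B m l lam mu" and "nonadj_invol_aut D B s"
    and "graph_iso V E (D \<times> UNIV) (constr2 B s)"
  shows "\<exists>(D' :: nat set) B' s'. srg D' B' m l lam mu \<and> nonadj_invol_aut D' B' s' \<and>
           graph_iso V E (D' \<times> UNIV) (constr2 B' s')"
proof -
  have "finite D" using assms(1) by (simp add: srg_def sgraph_def)
  then obtain g :: "'b \<Rightarrow> nat" where g: "inj_on g D"
    using finite_imp_inj_to_nat_seg by blast
  define B' where "B' x y \<longleftrightarrow> B (inv_into D g x) (inv_into D g y)" for x y
  define s' where "s' x = g (s (inv_into D g x))" for x
  interpret graph_relabelling g D B "g ` D" B'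
    using g by unfold_locales (simp_all add: B'_def inj_on_imp_bij_betw)
  have s': "s' (g x) = g (s x)" if "x \<in> D" for x
    using g that by (simp add: s'_def)
  have "s ` D \<subseteq> D" using assms(2) by (simp add: nonadj_invol_aut_def)
  then have "graph_iso V E (g ` D \<times> UNIV) (constr2 B' s')"
    using assms(3) graph_iso_constr2_image s' by (blast intro: graph_iso_trans)
  then show ?thesis
    using srg_image[OF assms(1)] nonadj_invol_aut_image[OF assms(2) s'] by blast
qed

locale deza_beta_one =
  fixes V :: "'a set" and E :: "'a \<Rightarrow> 'a \<Rightarrow> bool" and n k a :: nat
  assumes deza: "deza_graph V E n k (k - 1) a"
    and k_gt_1: "1 < k"
    and beta_one: "\<forall>v\<in>V. beta_at V E (k - 1) v = 1"
    and nonempty: "V \<noteq> {}"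
begin

abbreviation N :: "'a \<Rightarrow> 'a set" where "N \<equiv> nbhd V E"

lemma finite_V: "finite V"
  and irrefl: "v \<in> V \<Longrightarrow> \<not> E v v"
  and sym: "u \<in> V \<Longrightarrow> v \<in> V \<Longrightarrow> E u v \<longleftrightarrow> E v u"
  and card_nbhd: "v \<in> V \<Longrightarrow> card (N v) = k"
  and card_common_cases: "u \<in> V \<Longrightarrow> v \<in> V \<Longrightarrow> u \<noteq> v \<Longrightarrow>
    card (N u \<inter> N v) = a \<or> card (N u \<inter> N v) = k - 1"
  using deza by (auto simp: deza_graph_def sgraph_def regular_def)

lemma finite_N [simp]: "finite (N v)"
  using finite_V by (rule finite_nbhd)

lemma not_mem_own_nbhd [simp]: "v \<notin> N v"
  using irrefl by (simp add: mem_nbhd_iff)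

lemma mem_nbhd_sym: "u \<in> V \<Longrightarrow> v \<in> V \<Longrightarrow> u \<in> N v \<longleftrightarrow> v \<in> N u"
  using sym by (simp add: mem_nbhd_iff)

definition partner :: "'a \<Rightarrow> 'a" where
  "partner v = (THE u. u \<in> V \<and> u \<noteq> v \<and> card (N v \<inter> N u) = k - 1)"

lemma partner_ex1:
  assumes v: "v \<in> V"
  shows "\<exists>!u. u \<in> V \<and> u \<noteq> v \<and> card (N v \<inter> N u) = k - 1"
proof -
  have "card {u \<in> V. u \<noteq> v \<and> card (N v \<inter> N u) = k - 1} = 1"
    using beta_one v by (simp add: beta_at_def)
  then obtain z where z: "{u \<in> V. u \<noteq> v \<and> card (N v \<inter> N u) = k - 1} = {z}"
    by (rule card_1_singletonE)
  show ?thesis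
  proof
    show "z \<in> V \<and> z \<noteq> v \<and> card (N v \<inter> N z) = k - 1"
      using z by blast
    show "u = z" if "u \<in> V \<and> u \<noteq> v \<and> card (N v \<inter> N u) = k - 1" for u
      using z that by blast
  qed
qed

lemma partner:
  assumes "v \<in> V"
  shows partner_in_V [simp]: "partner v \<in> V" and partner_neq: "partner v \<noteq> v"
    and card_common_partner: "card (N v \<inter> N (partner v)) = k - 1"
  using theI'[OF partner_ex1[OF assms]] unfolding partner_def[symmetric] by blast+

lemma partner_unique:
  "v \<in> V \<Longrightarrow> u \<in> V \<Longrightarrow> u \<noteq> v \<Longrightarrow> card (N v \<inter> N u) = k - 1 \<Longrightarrow> partner v = u"
  unfolding partner_def by (rule the1_equality[OF partner_ex1]) auto

lemma partner_partner [simp]: "v \<in> V \<Longrightarrow> partner (partner v) = v"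
  using partner partner_unique by (metis Int_commute)

lemma a_less: "a < k - 1"
proof (rule ccontr)
  assume "\<not> a < k - 1"
  then have a_eq: "a = k - 1" using deza by (simp add: deza_graph_def)
  obtain v where v: "v \<in> V" using nonempty by blast
  have "N v \<subseteq> {partner v}"
  proof
    fix u assume u: "u \<in> N v"
    then have "u \<in> V" and "u \<noteq> v" by (auto simp: mem_nbhd_iff irrefl)
    moreover from this have "card (N v \<inter> N u) = k - 1"
      using card_common_cases[OF v] a_eq by metis
    ultimately show "u \<in> {partner v}"
      using partner_unique[OF v] by simp
  qed
  then have "card (N v) \<le> 1"
    using card_mono[of "{partner v}" "N v"] by simp
  then show False using card_nbhd[OF v] k_gt_1 by simp
qed

lemma card_common_nbhd:
  assumes v: "v \<in> V" and w: "w \<in> V"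
  shows "card (N v \<inter> N w) =
    a + (if v = w then k - a else 0) + (if v = partner w then k - 1 - a else 0)"
proof -
  consider "v = w" | "v = partner w" | "v \<noteq> w" "v \<noteq> partner w" by blast
  then show ?thesis
  proof cases
    case 1
    then show ?thesis using card_nbhd[OF w] partner_neq[OF w] a_less by auto
  next
    case 2
    then show ?thesis
      using card_common_partner[OF w] partner_neq[OF w] a_less by (auto simp: Int_commute)
  next
    case 3
    then have "card (N v \<inter> N w) \<noteq> k - 1"
      using partner_unique[OF v w] v by auto
    then show ?thesis using card_common_cases[OF v w] 3 by auto
  qed
qed

lemma adj_partner_iff:
  assumes u: "u \<in> V" and w: "w \<in> V"
  shows "E u (partner w) \<longleftrightarrow> E (partner u) w"
proof -
  have sum_eq: "(\<Sum>v\<in>N x. card (N v \<inter> N y)) =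
      a * k + (if y \<in> N x then k - a else 0) + (if partner y \<in> N x then k - 1 - a else 0)"
    if "x \<in> V" "y \<in> V" for x y
  proof -
    have "(\<Sum>v\<in>N x. card (N v \<inter> N y)) =
        (\<Sum>v\<in>N x. a + (if v = y then k - a else 0) + (if v = partner y then k - 1 - a else 0))"
      using that by (intro sum.cong refl card_common_nbhd) (auto simp: mem_nbhd_iff)
    then show ?thesis
      using card_nbhd[OF that(1)] by (simp add: sum.distrib)
  qed
  have "\<forall>x\<in>V. \<forall>y\<in>V. E x y \<longleftrightarrow> E y x" using sym by blast
  then have "(\<Sum>v\<in>N u. card (N v \<inter> N w)) = (\<Sum>x\<in>N w. card (N u \<inter> N x))"
    by (rule sum_card_common_nbhd_swap[OF finite_V])
  also have "\<dots> = (\<Sum>x\<in>N w. card (N x \<inter> N u))"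
    by (simp only: Int_commute[of "N u"])
  finally have "partner w \<in> N u \<longleftrightarrow> partner u \<in> N w"
    using sum_eq[OF u w] sum_eq[OF w u] mem_nbhd_sym[OF u w] a_less
    by (simp split: if_splits)
  then show ?thesis
    using u w sym by (simp add: mem_nbhd_iff)
qed

lemma adj_partner_partner: "u \<in> V \<Longrightarrow> w \<in> V \<Longrightarrow> E (partner u) (partner w) \<longleftrightarrow> E u w"
  using adj_partner_iff[of u "partner w"] by simp

lemma partner_mem_nbhd_partner_iff:
  "v \<in> V \<Longrightarrow> z \<in> V \<Longrightarrow> partner z \<in> N (partner v) \<longleftrightarrow> z \<in> N v"
  using adj_partner_partner by (simp add: mem_nbhd_iff)

definition common :: "'a \<Rightarrow> 'a set" where
  "common v = N v \<inter> N (partner v)"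

definition excl_nbr :: "'a \<Rightarrow> 'a" where
  "excl_nbr v = the_elem (N v - N (partner v))"

lemma nbhd_diff_partner:
  assumes v: "v \<in> V"
  shows "N v - N (partner v) = {excl_nbr v}"
proof -
  have "card (N v - N (partner v)) = 1"
    using card_Diff_subset_Int[of "N v" "N (partner v)"] card_nbhd[OF v]
      card_common_partner[OF v] k_gt_1
    by simp
  then show ?thesis
    unfolding excl_nbr_def by (metis card_1_singletonE the_elem_eq)
qed

lemma common_subset_V: "common v \<subseteq> V"
  by (auto simp: common_def mem_nbhd_iff)

lemma finite_common [simp]: "finite (common v)"
  by (simp add: common_def)

lemma card_common: "v \<in> V \<Longrightarrow> card (common v) = k - 1"
  by (simp add: common_def card_common_partner)

lemma not_mem_own_common [simp]: "v \<notin> common v"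
  by (simp add: common_def)

lemma nbhd_eq_insert_excl_nbr: "v \<in> V \<Longrightarrow> N v = insert (excl_nbr v) (common v)"
  using nbhd_diff_partner[of v] unfolding common_def by blast

lemma excl_nbr_not_mem_common: "v \<in> V \<Longrightarrow> excl_nbr v \<notin> common v"
  using nbhd_diff_partner[of v] unfolding common_def by blast

lemma excl_nbr_mem_nbhd: "v \<in> V \<Longrightarrow> excl_nbr v \<in> N v"
  using nbhd_diff_partner[of v] by blast

lemma excl_nbr_in_V [simp]: "v \<in> V \<Longrightarrow> excl_nbr v \<in> V"
  using excl_nbr_mem_nbhd by (simp add: mem_nbhd_iff)

lemma excl_nbr_neq: "v \<in> V \<Longrightarrow> excl_nbr v \<noteq> v"
  using excl_nbr_mem_nbhd not_mem_own_nbhd by metis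

lemma common_partner: "v \<in> V \<Longrightarrow> common (partner v) = common v"
  by (simp add: common_def Int_commute)

lemma partner_mem_common_iff:
  "v \<in> V \<Longrightarrow> z \<in> V \<Longrightarrow> partner z \<in> common v \<longleftrightarrow> z \<in> common v"
  using partner_mem_nbhd_partner_iff[of v z] partner_mem_nbhd_partner_iff[of "partner v" z]
  by (auto simp: common_def)

lemma partner_mem_common: "v \<in> V \<Longrightarrow> z \<in> common v \<Longrightarrow> partner z \<in> common v"
  using partner_mem_common_iff common_subset_V by blast

lemma excl_nbr_partner:
  assumes v: "v \<in> V"
  shows "excl_nbr (partner v) = partner (excl_nbr v)"
proof -
  have "excl_nbr v \<in> N v - N (partner v)"
    using nbhd_diff_partner[OF v] by blast
  then have "partner (excl_nbr v) \<in> N (partner v) - N (partner (partner v))"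
    using v partner_mem_nbhd_partner_iff[OF v]
      partner_mem_nbhd_partner_iff[OF partner_in_V[OF v]]
    by simp
  then show ?thesis
    using nbhd_diff_partner[OF partner_in_V[OF v]] by simp
qed

lemma excl_nbr_excl_nbr [simp]:
  assumes v: "v \<in> V"
  shows "excl_nbr (excl_nbr v) = v"
proof -
  let ?e = "excl_nbr v"
  have e: "?e \<in> V" "?e \<in> N v" "?e \<notin> N (partner v)"
    using nbhd_diff_partner[OF v] excl_nbr_in_V[OF v] by blast+
  have "v \<in> N ?e" using e mem_nbhd_sym v by blast
  moreover have "v \<notin> N (partner ?e)"
  proof
    assume "v \<in> N (partner ?e)"
    then have "partner v \<in> N ?e"
      using partner_mem_nbhd_partner_iff[OF partner_in_V[OF e(1)] v] e(1) by simp
    then show False using e mem_nbhd_sym v by simp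
  qed
  ultimately show ?thesis
    using nbhd_diff_partner[OF e(1)] by (metis DiffI singletonD)
qed

definition twist :: "'a \<Rightarrow> 'a" where
  "twist v = partner (excl_nbr v)"

lemma twist_in_V: "v \<in> V \<Longrightarrow> twist v \<in> V"
  by (simp add: twist_def)

lemma twist_twist: "v \<in> V \<Longrightarrow> twist (twist v) = v"
  by (simp add: twist_def excl_nbr_partner)

lemma twist_partner: "v \<in> V \<Longrightarrow> twist (partner v) = partner (twist v)"
  by (simp add: twist_def excl_nbr_partner)

lemma twist_neq_partner: "v \<in> V \<Longrightarrow> twist v \<noteq> partner v"
  using excl_nbr_neq by (metis partner_partner twist_def excl_nbr_in_V)

definition reps :: "'a set" where
  "reps = (SOME R. R \<subseteq> V \<and> (\<forall>v\<in>V. v \<in> R \<longleftrightarrow> partner v \<notin> R) \<and> (\<forall>v\<in>R. twist v \<in> R))"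

lemma reps_spec:
  "reps \<subseteq> V \<and> (\<forall>v\<in>V. v \<in> reps \<longleftrightarrow> partner v \<notin> reps) \<and> (\<forall>v\<in>reps. twist v \<in> reps)"
proof -
  have "\<exists>R\<subseteq>V. (\<forall>v\<in>V. v \<in> R \<longleftrightarrow> partner v \<notin> R) \<and> (\<forall>v\<in>R. twist v \<in> R)"
  proof (rule exists_invariant_transversal[OF finite_V])
    fix v assume v: "v \<in> V"
    show "partner v \<in> V \<and> partner (partner v) = v \<and> partner v \<noteq> v"
      using v partner_neq by simp
    show "twist v \<in> V \<and> twist (twist v) = v \<and> twist (partner v) = partner (twist v) \<and>
        twist v \<noteq> partner v"
      by (intro conjI twist_in_V twist_twist twist_partner twist_neq_partner v)
  qed
  then show ?thesis
    unfolding reps_def by (rule someI_ex)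
qed

lemma reps_subset_V: "reps \<subseteq> V"
  using reps_spec by blast

lemma mem_reps_iff: "v \<in> V \<Longrightarrow> v \<in> reps \<longleftrightarrow> partner v \<notin> reps"
  using reps_spec by blast

lemma twist_mem_reps: "v \<in> reps \<Longrightarrow> twist v \<in> reps"
  using reps_spec by blast

lemma card_partner_closed:
  assumes "S \<subseteq> V" and "\<And>z. z \<in> S \<Longrightarrow> partner z \<in> S"
  shows "card S = 2 * card (reps \<inter> S)"
proof (rule card_eq_twice_card_transversal)
  show "finite S" using assms(1) finite_V by (rule finite_subset)
  show "\<forall>v\<in>S. partner v \<in> S \<and> partner (partner v) = v"
    using assms by auto
  show "\<forall>v\<in>S. v \<in> reps \<longleftrightarrow> partner v \<notin> reps"
    using assms(1) mem_reps_iff by blast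
qed

lemma card_common_Int_eq_twice:
  assumes "u \<in> V" "w \<in> V"
  shows "card (common u \<inter> common w) = 2 * card (reps \<inter> (common u \<inter> common w))"
  using common_subset_V partner_mem_common assms by (intro card_partner_closed) auto

lemma a_eq_card_common_Int:
  assumes u: "u \<in> V" and w: "w \<in> V" and "w \<noteq> u" "w \<noteq> partner u"
  shows "a = card (common u \<inter> common w) +
    (if excl_nbr u \<in> common w then 1 else 0) + (if excl_nbr w \<in> common u then 1 else 0)"
proof -
  have "a = card (N u \<inter> N w)"
    using card_common_nbhd[OF u w] assms(3,4) partner_partner[OF w] by auto
  also have "\<dots> = card (insert (excl_nbr u) (common u) \<inter> insert (excl_nbr w) (common w))"
    using nbhd_eq_insert_excl_nbr u w by simp
  also have "\<dots> = card (common u \<inter> common w) +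
      (if excl_nbr u \<in> common w then 1 else 0) + (if excl_nbr w \<in> common u then 1 else 0)"
  proof (rule card_insert_Int_insert)
    show "excl_nbr u \<noteq> excl_nbr w"
      using assms(3) excl_nbr_excl_nbr u w by metis
  qed (simp_all add: excl_nbr_not_mem_common u w)
  finally show ?thesis .
qed

lemma even_a: "even a"
proof (cases "\<exists>v\<in>V. excl_nbr v \<noteq> partner v")
  case True
  then obtain v where v: "v \<in> V" and ne: "excl_nbr v \<noteq> partner v" by blast
  have "a = card (common v \<inter> common (excl_nbr v))"
    using a_eq_card_common_Int[OF v excl_nbr_in_V[OF v] excl_nbr_neq[OF v] ne] v by simp
  then show ?thesis
    using card_common_Int_eq_twice[OF v excl_nbr_in_V[OF v]] by simp
next
  case False
  then have excl_eq: "excl_nbr v = partner v" if "v \<in> V" for v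
    using that by blast
  obtain v where v: "v \<in> V" using nonempty by blast
  have "common v \<noteq> {}" using card_common[OF v] k_gt_1 by auto
  then obtain w where w: "w \<in> common v" by blast
  have wV: "w \<in> V" and w_ne: "w \<noteq> v" "w \<noteq> partner v"
    using w common_subset_V excl_nbr_not_mem_common[OF v] excl_eq[OF v] by auto
  have "v \<in> N w"
    using w v wV mem_nbhd_sym by (auto simp: common_def)
  moreover have "v \<noteq> excl_nbr w"
    using w_ne(2) excl_eq[OF wV] partner_partner[OF wV] by auto
  ultimately have "v \<in> common w"
    using nbhd_eq_insert_excl_nbr[OF wV] by simp
  then have "excl_nbr v \<in> common w" and "excl_nbr w \<in> common v"
    using excl_eq v wV w partner_mem_common_iff by simp_all
  then have "a = card (common v \<inter> common w) + 2"
    using a_eq_card_common_Int[OF v wV w_ne] by simp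
  then show ?thesis
    using card_common_Int_eq_twice[OF v wV] by simp
qed

lemma excl_nbr_mem_common_sym:
  assumes "u \<in> V" "w \<in> V" "w \<noteq> u" "w \<noteq> partner u"
  shows "excl_nbr u \<in> common w \<longleftrightarrow> excl_nbr w \<in> common u"
  using a_eq_card_common_Int[OF assms] even_a card_common_Int_eq_twice[OF assms(1,2)]
  by (auto split: if_splits)

lemma mem_common_excl_nbr_iff:
  assumes x: "x \<in> V" and y: "y \<in> V" and "y \<noteq> x"
  shows "y \<in> common (excl_nbr x) \<longleftrightarrow> excl_nbr x \<in> common y"
proof -
  have "y \<in> common (excl_nbr x) \<longleftrightarrow> y \<in> N (excl_nbr x)"
    using nbhd_eq_insert_excl_nbr[OF excl_nbr_in_V[OF x]] x assms(3) by auto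
  also have "\<dots> \<longleftrightarrow> excl_nbr x \<in> N y"
    using mem_nbhd_sym x y by simp
  also have "\<dots> \<longleftrightarrow> excl_nbr x \<in> common y"
  proof -
    have "excl_nbr x \<noteq> excl_nbr y"
      using assms(3) excl_nbr_excl_nbr[OF x] excl_nbr_excl_nbr[OF y] by metis
    then show ?thesis using nbhd_eq_insert_excl_nbr[OF y] by simp
  qed
  finally show ?thesis .
qed

definition delta_adj :: "'a \<Rightarrow> 'a \<Rightarrow> bool" where
  "delta_adj x y \<longleftrightarrow> y \<in> common (excl_nbr x)"

lemma delta_adj_iff:
  assumes x: "x \<in> V" and y: "y \<in> V"
  shows "delta_adj x y \<longleftrightarrow> excl_nbr y \<in> common x"
proof -
  consider "y = x" | "y = partner x" | "y \<noteq> x" "y \<noteq> partner x" by blast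
  then show ?thesis
  proof cases
    case 1
    then show ?thesis
      using excl_nbr_not_mem_common[OF excl_nbr_in_V[OF x]] excl_nbr_not_mem_common[OF x] x
      by (simp add: delta_adj_def)
  next
    case 2
    then show ?thesis
      using excl_nbr_not_mem_common[OF excl_nbr_in_V[OF x]] excl_nbr_not_mem_common[OF x] x
        partner_mem_common_iff excl_nbr_partner
      by (simp add: delta_adj_def)
  next
    case 3
    then show ?thesis
      using mem_common_excl_nbr_iff[OF x y] excl_nbr_mem_common_sym[OF x y]
      by (simp add: delta_adj_def)
  qed
qed

lemma delta_adj_sym: "x \<in> V \<Longrightarrow> y \<in> V \<Longrightarrow> delta_adj x y \<longleftrightarrow> delta_adj y x"
  using delta_adj_iff mem_common_excl_nbr_iff by (cases "x = y") (auto simp: delta_adj_def)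

lemma a_eq_card_common_excl_nbr:
  assumes x: "x \<in> V" and y: "y \<in> V" and "y \<noteq> x" "y \<noteq> partner x"
  shows "a = card (common (excl_nbr x) \<inter> common (excl_nbr y)) +
    (if delta_adj x y then 2 else 0)"
proof -
  have "excl_nbr y \<noteq> excl_nbr x" and "excl_nbr y \<noteq> partner (excl_nbr x)"
    using assms excl_nbr_excl_nbr excl_nbr_partner partner_in_V by metis+
  from a_eq_card_common_Int[OF excl_nbr_in_V[OF x] excl_nbr_in_V[OF y] this]
  show ?thesis
    using x y delta_adj_sym[OF x y] by (simp add: delta_adj_def)
qed

lemma two_le_a: "2 \<le> a"
proof -
  obtain v where v: "v \<in> V" using nonempty by blast
  have "common v \<noteq> {}" using card_common[OF v] k_gt_1 by auto
  then obtain y where y: "y \<in> common v" by blast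
  have yV: "y \<in> V" using y common_subset_V by blast
  have "y \<noteq> excl_nbr v" "y \<noteq> partner (excl_nbr v)"
    using y excl_nbr_not_mem_common[OF v] partner_mem_common_iff[OF v excl_nbr_in_V[OF v]]
    by auto
  from a_eq_card_common_excl_nbr[OF excl_nbr_in_V[OF v] yV this]
  show ?thesis
    using y v by (simp add: delta_adj_def)
qed

lemma nbhd_delta_adj: "nbhd reps delta_adj x = reps \<inter> common (excl_nbr x)"
  by (auto simp: nbhd_def delta_adj_def)

lemma partner_not_mem_reps: "x \<in> reps \<Longrightarrow> partner x \<notin> reps"
  using mem_reps_iff reps_subset_V by blast

lemma srg_delta: "srg reps delta_adj (card reps) ((k - 1) div 2) ((a - 2) div 2) (a div 2)"
  unfolding srg_def sgraph_def regular_def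
proof (intro conjI ballI impI)
  show "finite reps" using reps_subset_V finite_V by (rule finite_subset)
  show "card reps = card reps" ..
next
  fix x assume "x \<in> reps"
  then have x: "x \<in> V" using reps_subset_V by blast
  show "\<not> delta_adj x x"
    using excl_nbr_not_mem_common[OF x] delta_adj_iff[OF x x] by simp
  have "card (common (excl_nbr x)) = 2 * card (reps \<inter> common (excl_nbr x))"
    using common_subset_V partner_mem_common[OF excl_nbr_in_V[OF x]] by (rule card_partner_closed)
  then show "card (nbhd reps delta_adj x) = (k - 1) div 2"
    using card_common x by (simp add: nbhd_delta_adj)
next
  fix x y assume "x \<in> reps" "y \<in> reps"
  then show "delta_adj x y \<longleftrightarrow> delta_adj y x"
    using delta_adj_sym reps_subset_V by blast
next
  fix x y assume xy: "x \<in> reps" "y \<in> reps" "x \<noteq> y"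
  then have x: "x \<in> V" and y: "y \<in> V" using reps_subset_V by blast+
  have "y \<noteq> partner x" using xy partner_not_mem_reps by blast
  with xy have a_eq: "a = 2 * card (nbhd reps delta_adj x \<inter> nbhd reps delta_adj y) +
      (if delta_adj x y then 2 else 0)"
    using a_eq_card_common_excl_nbr[OF x y] card_common_Int_eq_twice x y
    by (simp add: nbhd_delta_adj Int_left_commute Int_assoc)
  show "card (nbhd reps delta_adj x \<inter> nbhd reps delta_adj y) = (a - 2) div 2"
    if "delta_adj x y" using that a_eq by simp
  show "card (nbhd reps delta_adj x \<inter> nbhd reps delta_adj y) = a div 2"
    if "\<not> delta_adj x y" using that a_eq by simp
qed

lemma delta_adj_twist: "x \<in> V \<Longrightarrow> delta_adj (twist x) y \<longleftrightarrow> y \<in> common x"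
  by (simp add: delta_adj_def twist_def excl_nbr_partner common_partner)

lemma twist_nonadj_invol_aut: "nonadj_invol_aut reps delta_adj twist"
  unfolding nonadj_invol_aut_def
proof (intro conjI ballI impI)
  show "twist ` reps \<subseteq> reps" using twist_mem_reps by blast
next
  fix x assume "x \<in> reps"
  then have x: "x \<in> V" using reps_subset_V by blast
  show "twist (twist x) = x" using twist_twist[OF x] .
  show "\<not> delta_adj x (twist x)"
    using excl_nbr_not_mem_common[OF excl_nbr_in_V[OF x]] partner_mem_common_iff x
    by (simp add: delta_adj_def twist_def)
next
  fix x y assume "x \<in> reps" "y \<in> reps"
  then have x: "x \<in> V" and y: "y \<in> V" using reps_subset_V by blast+
  have "delta_adj (twist x) (twist y) \<longleftrightarrow> twist y \<in> common x"
    by (rule delta_adj_twist[OF x])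
  also have "\<dots> \<longleftrightarrow> excl_nbr y \<in> common x"
    using partner_mem_common_iff[OF x] y by (simp add: twist_def)
  also have "\<dots> \<longleftrightarrow> delta_adj x y"
    using delta_adj_iff[OF x y] by simp
  finally show "delta_adj (twist x) (twist y) \<longleftrightarrow> delta_adj x y" .
qed

definition relabel :: "'a \<Rightarrow> 'a \<times> bool" where
  "relabel v = (if v \<in> reps then v else partner v, v \<notin> reps)"

lemma bij_betw_relabel: "bij_betw relabel V (reps \<times> UNIV)"
  unfolding relabel_def
proof (rule bij_betw_transversal_times_UNIV[OF reps_subset_V])
  show "\<forall>v\<in>V. partner v \<in> V \<and> partner (partner v) = v" by simp
  show "\<forall>v\<in>V. v \<in> reps \<longleftrightarrow> partner v \<notin> reps" using mem_reps_iff by blast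
qed

lemma relabel_excl_nbr:
  assumes u: "u \<in> V"
  shows "relabel (excl_nbr u) = (twist (fst (relabel u)), \<not> snd (relabel u))"
proof (cases "u \<in> reps")
  case True
  have "partner (excl_nbr u) \<in> reps"
    using twist_mem_reps[OF True] by (simp add: twist_def)
  then have "excl_nbr u \<notin> reps"
    using mem_reps_iff[OF excl_nbr_in_V[OF u]] by simp
  then show ?thesis using True by (simp add: relabel_def twist_def)
next
  case False
  then have "partner u \<in> reps" using mem_reps_iff[OF u] by simp
  moreover have twist_pu: "twist (partner u) = excl_nbr u"
    using u by (simp add: twist_def excl_nbr_partner)
  ultimately have "excl_nbr u \<in> reps" using twist_mem_reps by metis
  then show ?thesis using False twist_pu by (simp add: relabel_def)
qed

lemma fst_relabel_in_V: "u \<in> V \<Longrightarrow> fst (relabel u) \<in> V"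
  by (simp add: relabel_def)

lemma common_fst_relabel: "u \<in> V \<Longrightarrow> common (fst (relabel u)) = common u"
  by (simp add: relabel_def common_partner)

lemma fst_relabel_mem_common_iff:
  "u \<in> V \<Longrightarrow> w \<in> V \<Longrightarrow> fst (relabel w) \<in> common u \<longleftrightarrow> w \<in> common u"
  by (simp add: relabel_def partner_mem_common_iff)

lemma twist_fst_relabel_not_mem_common:
  assumes u: "u \<in> V"
  shows "twist (fst (relabel u)) \<notin> common u"
proof -
  have "excl_nbr u \<notin> common u" and "partner (excl_nbr u) \<notin> common u"
    using excl_nbr_not_mem_common[OF u] partner_mem_common_iff[OF u excl_nbr_in_V[OF u]]
    by simp_all
  then show ?thesis
    using u by (simp add: relabel_def twist_def excl_nbr_partner)
qed

lemma graph_iso_constr2: "graph_iso V E (reps \<times> UNIV) (constr2 delta_adj twist)"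
  unfolding graph_iso_def
proof (intro exI conjI ballI)
  show bij: "bij_betw relabel V (reps \<times> UNIV)" by (rule bij_betw_relabel)
  fix u w assume u: "u \<in> V" and w: "w \<in> V"
  obtain x i y j where rel: "relabel u = (x, i)" "relabel w = (y, j)"
    by (metis surj_pair)
  have x: "x \<in> V" and common_x: "common x = common u" and twist_x: "twist x \<notin> common u"
    and y: "y \<in> common u \<longleftrightarrow> w \<in> common u"
    using fst_relabel_in_V[OF u] common_fst_relabel[OF u] twist_fst_relabel_not_mem_common[OF u]
      fst_relabel_mem_common_iff[OF u w] rel
    by simp_all
  have "E u w \<longleftrightarrow> w \<in> N u"
    using w by (simp add: mem_nbhd_iff)
  also have "\<dots> \<longleftrightarrow> w = excl_nbr u \<or> w \<in> common u"
    using nbhd_eq_insert_excl_nbr[OF u] by simp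
  also have "\<dots> \<longleftrightarrow> relabel w = relabel (excl_nbr u) \<or> w \<in> common u"
    using bij_betw_imp_inj_on[OF bij] u w by (simp add: inj_on_eq_iff)
  also have "\<dots> \<longleftrightarrow> (twist x = y \<and> j = (\<not> i)) \<or> y \<in> common u"
    using relabel_excl_nbr[OF u] rel y by auto
  also have "\<dots> \<longleftrightarrow> constr2 delta_adj twist (x, i) (y, j)"
    using delta_adj_twist[OF x] common_x twist_x by (auto simp: constr2_def constr1_def)
  finally show "E u w \<longleftrightarrow> constr2 delta_adj twist (relabel u) (relabel w)"
    using rel by simp
qed

end

theorem theorem2:
  fixes V :: "'a set" and E :: "'a \<Rightarrow> 'a \<Rightarrow> bool" and n k a :: nat
  assumes "deza_graph V E n k (k - 1) a"
    and "k > 1"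
    and "\<forall>v\<in>V. beta_at V E (k - 1) v = 1"
  shows "\<exists>(D :: nat set) B m l lam mu. srg D B m l lam mu \<and> lam + 1 = mu \<and>
           (graph_iso V E (D \<times> UNIV) (constr1 B) \<or>
            (\<exists>s. nonadj_invol_aut D B s \<and> graph_iso V E (D \<times> UNIV) (constr2 B s)))"
proof (cases "V = {}")
  case True
  have "srg ({} :: nat set) (\<lambda>_ _. False) 0 0 0 1"
    by (simp add: srg_def sgraph_def regular_def)
  moreover have "graph_iso V E ({} \<times> UNIV) (constr1 (\<lambda>_ _. False))"
    using True by (simp add: graph_iso_def bij_betw_def)
  ultimately show ?thesis by fastforce
next
  case False
  then interpret deza_beta_one V E n k a
    using assms by unfold_locales
  have "(a - 2) div 2 + 1 = a div 2"
    using even_a two_le_a by (auto elim: evenE)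
  then show ?thesis
    using constr2_relabel_nat[OF srg_delta twist_nonadj_invol_aut graph_iso_constr2] by blast
qed

end
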